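(* Let $\beta=(1+\sqrt{13})/2$, the positive root of $x^2-x-3$, and define $F:[0,1+\beta)\to[0,1+\beta)$ by $F(x)=\beta x-y_j$ for $x\in I_j$, where $I_1=[0,1)$, $I_2=[1,1+1/\beta)$, $I_3=[1+1/\beta,1+2/\beta)$, $I_4=[1+2/\beta,\beta)$, $I_5=[\beta,1+\beta)$ and $y_1=0$, $y_2=0$, $y_3=1$, $y_4=2$, $y_5=3+\beta$. Then the orbit $\{F^n(\beta-1):n\ge0\}$ of $\beta-1$ under $F$ is infinite.
   Context: This $F$ is the generalized $\beta$-transformation associated with the one-dimensional substitution $l\to lsss$, $s\to l$ with tile lengths $|l|=\beta$, $|s|=1$; note $1+3/\beta=\beta$. *)

theory Defs
  imports Complex_Main
begin

definition beta :: real where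
  "beta = (1 + sqrt 13) / 2"

text \<open>The generalized beta-transformation on [0, 1 + beta); outside this interval
  (never reached from points in it) it is set to the identity.\<close>
definition F :: "real \<Rightarrow> real" where
  "F x = (if 0 \<le> x \<and> x < 1 then beta * x
          else if 1 \<le> x \<and> x < 1 + 1 / beta then beta * x
          else if 1 + 1 / beta \<le> x \<and> x < 1 + 2 / beta then beta * x - 1
          else if 1 + 2 / beta \<le> x \<and> x < beta then beta * x - 2
          else if beta \<le> x \<and> x < 1 + beta then beta * x - (3 + beta)
          else x)"

end

theory Submission
  imports Defs "HOL-Computational_Algebra.Polynomial"
begin

(* The orbit of beta - 1 stays in Z[beta] \<inter> [0, 1 + beta), where F acts as x \<mapsto> beta x - d
   with a digit d \<in> {0, 1, 2, 3 + beta}.  Under the Galois conjugation beta \<mapsto> 1 - beta,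
   well defined because beta is irrational, this becomes multiplication by 1 - beta,
   of modulus beta - 1 > 1.3, followed by a shift by at most 2.  Since F^4 (beta - 1) = 3 beta - 6
   has conjugate of modulus 3 + 3 beta > 7, from then on the moduli of the conjugates
   increase strictly, so the orbit points are pairwise distinct. *)

lemma beta_squared: "beta * beta = beta + 3"
  unfolding beta_def by (simp add: algebra_simps)

lemma beta_bounds: "2.3 < beta" "beta < 2.31"
proof -
  have "3.6 < sqrt 13" by (rule real_less_rsqrt) (simp add: power2_eq_square)
  moreover have "sqrt 13 < 3.62" by (rule real_less_lsqrt) (simp_all add: power2_eq_square)
  ultimately show "2.3 < beta" "beta < 2.31" unfolding beta_def by auto
qed

lemma beta_algebraic_int: "algebraic_int beta"
  by (rule algebraic_int.intros[of "[:-3, -1, 1:]"])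
     (auto simp: coeff_pCons beta_squared algebra_simps split: nat.split)

lemma beta_irrational: "beta \<notin> \<rat>"
proof
  assume "beta \<in> \<rat>"
  with beta_algebraic_int have "beta \<in> \<int>" by (rule rational_algebraic_int_is_int)
  then obtain k :: int where "beta = of_int k" by (elim Ints_cases)
  with beta_bounds have "real_of_int 2 < of_int k" "of_int k < real_of_int 3" by simp_all
  then show False unfolding of_int_less_iff by linarith
qed

lemma of_int_plus_beta_eq_iff:
  "of_int a + of_int b * beta = of_int c + of_int d * beta \<longleftrightarrow> a = c \<and> b = d"
proof
  assume eq: "of_int a + of_int b * beta = of_int c + of_int d * beta"
  have "b = d"
  proof (rule ccontr)
    assume "b \<noteq> d"
    with eq have "beta = of_int (a - c) / of_int (d - b)" by (simp add: field_simps)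
    then have "beta \<in> \<rat>" by (metis Rats_divide Rats_of_int)
    with beta_irrational show False by contradiction
  qed
  with eq show "a = c \<and> b = d" by simp
qed simp

lemma F_eq_digit:
  assumes "0 \<le> x" "x < 1 + beta"
  shows "F x = (if beta * x < beta + 1 then beta * x
                else if beta * x < beta + 2 then beta * x - 1
                else if beta * x < beta + 3 then beta * x - 2
                else beta * x - (3 + beta))"
proof -
  have pos: "beta > 0" using beta_bounds by simp
  have lt: "x < 1 \<longleftrightarrow> beta * x < beta"
       "x < 1 + c / beta \<longleftrightarrow> beta * x < beta + c"
       "x < beta \<longleftrightarrow> beta * x < beta + 3" for c
    using pos by (auto simp: field_simps simp flip: beta_squared)
  have le: "1 \<le> x \<longleftrightarrow> beta \<le> beta * x"
       "1 + c / beta \<le> x \<longleftrightarrow> beta + c \<le> beta * x"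
       "beta \<le> x \<longleftrightarrow> beta + 3 \<le> beta * x" for c
    by (simp_all only: not_less[symmetric] lt)
  show ?thesis
    unfolding F_def lt le using assms by auto
qed

definition Zbeta :: "real set" where
  "Zbeta = {of_int a + of_int b * beta | a b. True}"

(* Meaningful only on Zbeta, where of_int_plus_beta_eq_iff makes THE well defined. *)
definition galois_conj :: "real \<Rightarrow> real" where
  "galois_conj x =
     (THE c. \<exists>a b. x = of_int a + of_int b * beta \<and> c = of_int a + of_int b * (1 - beta))"

lemma galois_conj_of_int_beta [simp]:
  "galois_conj (of_int a + of_int b * beta) = of_int a + of_int b * (1 - beta)"
  unfolding galois_conj_def
  by (rule the_equality) (auto simp: of_int_plus_beta_eq_iff)

lemma beta_times_of_int_beta:
  "beta * (of_int a + of_int b * beta) = of_int (3 * b) + of_int (a + b) * beta"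
proof -
  have "beta * (of_int a + of_int b * beta) = of_int a * beta + of_int b * (beta * beta)"
    by (simp add: algebra_simps)
  then show ?thesis
    by (simp add: beta_squared algebra_simps)
qed

lemma F_digit:
  assumes "0 \<le> x" "x < 1 + beta"
  obtains c e :: int
  where "F x = beta * x - (of_int c + of_int e * beta)" "0 \<le> F x" "F x < 1 + beta"
    and "\<bar>of_int c + of_int e * (1 - beta)\<bar> \<le> 2"
proof -
  have "0 \<le> beta * x" "beta * x < 2 * beta + 3"
    using assms beta_bounds mult_strict_left_mono[of x "1 + beta" beta]
    by (simp_all add: algebra_simps beta_squared)
  moreover note F_eq_digit[OF assms] beta_bounds
  ultimately consider
      "F x = beta * x - (of_int 0 + of_int 0 * beta)" "0 \<le> F x" "F x < 1 + beta"
    | "F x = beta * x - (of_int 1 + of_int 0 * beta)" "0 \<le> F x" "F x < 1 + beta"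
    | "F x = beta * x - (of_int 2 + of_int 0 * beta)" "0 \<le> F x" "F x < 1 + beta"
    | "F x = beta * x - (of_int 3 + of_int 1 * beta)" "0 \<le> F x" "F x < 1 + beta"
    by (cases "beta * x < beta + 1"; cases "beta * x < beta + 2"; cases "beta * x < beta + 3")
       (simp_all only: if_True if_False; linarith)+
  then show thesis
    using that beta_bounds by cases fastforce+
qed

lemma F_Zbeta_galois_conj:
  assumes "x \<in> Zbeta \<inter> {0..<1 + beta}"
  shows "F x \<in> Zbeta \<inter> {0..<1 + beta}"
    and "(beta - 1) * \<bar>galois_conj x\<bar> - 2 \<le> \<bar>galois_conj (F x)\<bar>"
proof -
  obtain a b where x: "x = of_int a + of_int b * beta"
    using assms unfolding Zbeta_def by blast
  from assms have "0 \<le> x" "x < 1 + beta"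
    by auto
  then obtain c e :: int where Fx: "F x = beta * x - (of_int c + of_int e * beta)"
    and "0 \<le> F x" "F x < 1 + beta"
    and digit: "\<bar>of_int c + of_int e * (1 - beta)\<bar> \<le> 2"
    by (rule F_digit)
  have Fx': "F x = of_int (3 * b - c) + of_int (a + b - e) * beta"
    using Fx unfolding x beta_times_of_int_beta by (simp add: algebra_simps)
  then have "F x \<in> Zbeta"
    unfolding Zbeta_def by blast
  with \<open>0 \<le> F x\<close> \<open>F x < 1 + beta\<close> show "F x \<in> Zbeta \<inter> {0..<1 + beta}"
    by simp
  have "(1 - beta) * galois_conj x = of_int a * (1 - beta) + of_int b * ((1 - beta) * (1 - beta))"
    unfolding x galois_conj_of_int_beta by (simp add: algebra_simps)
  also have "(1 - beta) * (1 - beta) = 4 - beta"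
    using beta_squared by (simp add: algebra_simps)
  finally have "galois_conj (F x) = (1 - beta) * galois_conj x - (of_int c + of_int e * (1 - beta))"
    unfolding Fx' galois_conj_of_int_beta by (simp add: algebra_simps)
  moreover have "\<bar>(1 - beta) * galois_conj x\<bar> = (beta - 1) * \<bar>galois_conj x\<bar>"
    using beta_bounds by (simp add: abs_mult)
  ultimately show "(beta - 1) * \<bar>galois_conj x\<bar> - 2 \<le> \<bar>galois_conj (F x)\<bar>"
    using digit by linarith
qed

lemma F_funpow_Zbeta:
  assumes "x \<in> Zbeta \<inter> {0..<1 + beta}"
  shows "(F ^^ n) x \<in> Zbeta \<inter> {0..<1 + beta}"
proof (induction n)
  case (Suc n)
  then show ?case
    using F_Zbeta_galois_conj(1) by simp
qed (use assms in simp)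

lemma galois_conj_F_increasing:
  assumes "x \<in> Zbeta \<inter> {0..<1 + beta}" "7 \<le> \<bar>galois_conj x\<bar>"
  shows "\<bar>galois_conj x\<bar> < \<bar>galois_conj (F x)\<bar>"
proof -
  have "1.3 * \<bar>galois_conj x\<bar> \<le> (beta - 1) * \<bar>galois_conj x\<bar>"
    using beta_bounds by (intro mult_right_mono) auto
  with F_Zbeta_galois_conj(2)[OF assms(1)] assms(2) show ?thesis
    by linarith
qed

lemma F_orbit_beta_minus_one_4:
  "(F ^^ 4) (beta - 1) = of_int (-6) + of_int 3 * beta"
proof -
  have "F (beta - 1) = 3"
    using F_eq_digit[of "beta - 1"] beta_bounds beta_squared by (simp add: algebra_simps)
  moreover have "F 3 = 2 * beta - 3"
    using F_eq_digit[of 3] beta_bounds by simp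
  moreover have "F (2 * beta - 3) = 5 - beta"
    using F_eq_digit[of "2 * beta - 3"] beta_bounds beta_squared by (simp add: algebra_simps)
  moreover have "F (5 - beta) = 3 * beta - 6"
    using F_eq_digit[of "5 - beta"] beta_bounds beta_squared by (simp add: algebra_simps)
  ultimately show ?thesis
    by (simp add: numeral_eq_Suc)
qed

lemma strict_mono_beyond_threshold:
  fixes f :: "nat \<Rightarrow> 'a :: linorder"
  assumes "c \<le> f m" and "\<And>n. c \<le> f n \<Longrightarrow> f n < f (Suc n)"
  shows "strict_mono (\<lambda>k. f (m + k))"
proof -
  have "c \<le> f (m + k)" for k
    by (induction k) (use assms in \<open>auto intro: order.trans order.strict_implies_order\<close>)
  with assms(2) show ?thesis
    by (simp add: strict_mono_Suc_iff)
qed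

theorem mainTheorem6:
  shows "infinite {(F ^^ n) (beta - 1) | n :: nat. True}"
proof -
  have "beta - 1 \<in> Zbeta"
    unfolding Zbeta_def mem_Collect_eq by (rule exI[of _ "-1"], rule exI[of _ 1]) simp
  with beta_bounds have orbit: "(F ^^ n) (beta - 1) \<in> Zbeta \<inter> {0..<1 + beta}" for n
    by (intro F_funpow_Zbeta) simp
  define s where "s n = \<bar>galois_conj ((F ^^ n) (beta - 1))\<bar>" for n
  have "s n < s (Suc n)" if "7 \<le> s n" for n
    using galois_conj_F_increasing[of "(F ^^ n) (beta - 1)"] orbit[of n] that
    unfolding s_def by simp
  moreover have "7 \<le> s 4"
    unfolding s_def F_orbit_beta_minus_one_4 galois_conj_of_int_beta using beta_bounds by simp
  ultimately have "strict_mono (\<lambda>k. s (4 + k))"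
    by (rule strict_mono_beyond_threshold[rotated])
  then have "inj (\<lambda>k. (F ^^ (4 + k)) (beta - 1))"
    unfolding s_def inj_def by (metis strict_mono_eq)
  then have "infinite (range (\<lambda>k. (F ^^ (4 + k)) (beta - 1)))"
    by (rule range_inj_infinite)
  moreover have "range (\<lambda>k. (F ^^ (4 + k)) (beta - 1)) \<subseteq> {(F ^^ n) (beta - 1) | n :: nat. True}"
    by auto
  ultimately show ?thesis
    using infinite_super by blast
qed

end
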